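(* Let $c\neq o$ be vertices such that there is exactly one directed path $\pi$ from $c$ to $o$, and let $\delta=\delta_{co}$ be its length. Let $\bar L$ be the $(N-\delta-1)\times(N-\delta-1)$ principal submatrix of $L$ obtained by deleting the rows and columns indexed by the $\delta+1$ vertices of $\pi$. Then $$e_o^T\operatorname{adj}(sI+L)e_c=\vartheta(\pi)\,\det\big(sI_{N-\delta-1}+\bar L\big),$$ where the determinant of an empty matrix is $1$. Consequently, the roots $-\gamma_i$ of $h(s)=e_o^T\operatorname{adj}(sI+L)e_c$ are exactly the eigenvalues of $-\bar L$.
   Context: $\mathcal G$ is a weighted directed graph on $\{1,\dots,N\}$ with adjacency matrix $A=[a_{ij}]$. Here $a_{ij}>0$ if there is an arc from $j$ to $i$, of weight $a_{ij}$, and $a_{ij}=0$ otherwise (no self-loops). The Laplacian is $L=D-A$ with $D=\mathrm{diag}(\sum_j a_{ij})$. A directed path from $u$ to $w$ is a sequence of pairwise distinct vertices $u=v_0,\dots,v_\ell=w$ with an arc from $v_k$ to $v_{k+1}$ for each $k$. Its length is $\ell$ and its weight $\vartheta(\pi)$ is the product of its arc weights. $\delta_{uw}$ is the length of a shortest directed path from $u$ to $w$. $e_i$ is the $i$-th canonical basis vector, and $\operatorname{adj}$ denotes the adjugate matrix. *)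

theory Defs
  imports Complex_Main "Jordan_Normal_Form.Char_Poly" "Jordan_Normal_Form.DL_Submatrix"
begin

text \<open>Vertices are 0..<N (the paper's 1..N shifted by one).
  a i j > 0 means there is an arc from j to i of weight a i j.\<close>

definition weighted_digraph :: "nat \<Rightarrow> (nat \<Rightarrow> nat \<Rightarrow> real) \<Rightarrow> bool" where
  "weighted_digraph N a \<longleftrightarrow> (\<forall>i<N. \<forall>j<N. a i j \<ge> 0) \<and> (\<forall>i<N. a i i = 0)"

definition adjacency :: "nat \<Rightarrow> (nat \<Rightarrow> nat \<Rightarrow> real) \<Rightarrow> real mat" where
  "adjacency N a = mat N N (\<lambda>(i,j). a i j)"

definition laplacian :: "nat \<Rightarrow> (nat \<Rightarrow> nat \<Rightarrow> real) \<Rightarrow> real mat" where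
  "laplacian N a = mat N N (\<lambda>(i,j). if i = j then (\<Sum>k<N. a i k) else 0) - adjacency N a"

definition dpath :: "nat \<Rightarrow> (nat \<Rightarrow> nat \<Rightarrow> real) \<Rightarrow> nat \<Rightarrow> nat \<Rightarrow> nat list \<Rightarrow> bool" where
  "dpath N a u w vs \<longleftrightarrow> vs \<noteq> [] \<and> hd vs = u \<and> last vs = w \<and> distinct vs \<and> set vs \<subseteq> {..<N}
     \<and> (\<forall>k. Suc k < length vs \<longrightarrow> a (vs ! Suc k) (vs ! k) > 0)"

definition path_length :: "nat list \<Rightarrow> nat" where
  "path_length vs = length vs - 1"

definition path_weight :: "(nat \<Rightarrow> nat \<Rightarrow> real) \<Rightarrow> nat list \<Rightarrow> real" where
  "path_weight a vs = (\<Prod>k<length vs - 1. a (vs ! Suc k) (vs ! k))"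

definition shortest_dist :: "nat \<Rightarrow> (nat \<Rightarrow> nat \<Rightarrow> real) \<Rightarrow> nat \<Rightarrow> nat \<Rightarrow> nat" where
  "shortest_dist N a u w = (LEAST l. \<exists>vs. dpath N a u w vs \<and> path_length vs = l)"

abbreviation cmat :: "real mat \<Rightarrow> complex mat" where
  "cmat M \<equiv> map_mat complex_of_real M"

end

theory Submission
  imports Defs "HOL-Combinatorics.Cycles" "HOL-Combinatorics.Orbits"
begin

text \<open>Expand the (c, t) cofactor of sI + L by the Leibniz formula over the permutations p
  with p c = t. Off the diagonal sI + L has the entries -a i j, so p contributes only if each
  vertex k \<noteq> c moved by p receives an arc from p k. Following the orbit of t under p back to c
  then gives a directed path from c to t, which by uniqueness is \<pi>; hence p agrees on \<pi> with
  the cycle \<sigma> walking \<pi> backwards, and p = q \<circ> \<sigma> for a permutation q of the remaining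
  vertices. The cycle contributes sign (-1)^\<delta> and the product (-1)^\<delta> \<vartheta>(\<pi>), while the sum
  over q is det (sI + L') for the principal submatrix L' of L off \<pi>.\<close>

section \<open>Cycles along a path\<close>

lemma sign_cycle_of_list:
  assumes "distinct cs"
  shows "sign (cycle_of_list cs) = (-1) ^ (length cs - 1)"
  using assms
proof (induction cs rule: cycle_of_list.induct)
  case (1 i j cs)
  have "sign (cycle_of_list (i # j # cs)) = sign (Transposition.transpose i j) * sign (cycle_of_list (j # cs))"
    by (simp add: sign_compose permutation_swap_id permutation_of_cycle)
  also have "\<dots> = (-1) ^ (length (i # j # cs) - 1)" using 1 by (simp add: sign_swap_id)
  finally show ?case .
qed (simp_all add: sign_id)

lemma cycle_of_list_nth:
  assumes "distinct cs" "Suc k < length cs"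
  shows "cycle_of_list cs (cs ! k) = cs ! Suc k"
proof -
  have "cycle_of_list cs (cs ! k) = map (cycle_of_list cs) cs ! k" using assms(2) by simp
  also have "\<dots> = rotate1 cs ! k" using cyclic_rotation[OF assms(1), of 1] by simp
  also have "\<dots> = cs ! Suc k" using assms(2) by (cases cs) (auto simp: nth_append)
  finally show ?thesis .
qed

lemma cycle_of_list_last:
  assumes "distinct cs" "cs \<noteq> []"
  shows "cycle_of_list cs (last cs) = hd cs"
proof -
  have "cycle_of_list cs (last cs) = map (cycle_of_list cs) cs ! (length cs - 1)"
    using assms(2) by (simp add: last_conv_nth)
  also have "\<dots> = rotate1 cs ! (length cs - 1)" using cyclic_rotation[OF assms(1), of 1] by simp
  also have "\<dots> = hd cs" using assms(2) by (cases cs) (auto simp: nth_append)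
  finally show ?thesis .
qed

lemma cycle_of_list_rev_nth_Suc:
  assumes "distinct cs" "Suc i < length cs"
  shows "cycle_of_list (rev cs) (cs ! Suc i) = cs ! i"
proof -
  define j where "j = length cs - 2 - i"
  have "rev cs ! j = cs ! Suc i" "rev cs ! Suc j = cs ! i"
    using assms(2) by (simp_all add: rev_nth j_def Suc_diff_Suc)
  moreover have "cycle_of_list (rev cs) (rev cs ! j) = rev cs ! Suc j"
    using assms by (intro cycle_of_list_nth) (simp_all add: j_def)
  ultimately show ?thesis by simp
qed

lemma cycle_of_list_rev_hd:
  assumes "distinct cs" "cs \<noteq> []"
  shows "cycle_of_list (rev cs) (hd cs) = last cs"
  using cycle_of_list_last[of "rev cs"] assms by (simp add: last_rev hd_rev)

lemma bij_betw_compose_permutes_agreeing: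
  assumes \<sigma>: "\<sigma> permutes S" and SU: "S \<subseteq> U"
  shows "bij_betw (\<lambda>q. q \<circ> \<sigma>) {q. q permutes U - S} {p. p permutes U \<and> (\<forall>x\<in>S. p x = \<sigma> x)}"
proof (rule bij_betw_byWitness[where f' = "\<lambda>p. p \<circ> inv_into UNIV \<sigma>"])
  show "\<forall>q\<in>{q. q permutes U - S}. q \<circ> \<sigma> \<circ> inv_into UNIV \<sigma> = q"
    by (simp only: comp_assoc permutes_inv_o(1)[OF \<sigma>] comp_id) simp
  show "\<forall>p\<in>{p. p permutes U \<and> (\<forall>x\<in>S. p x = \<sigma> x)}. p \<circ> inv_into UNIV \<sigma> \<circ> \<sigma> = p"
    by (simp only: comp_assoc permutes_inv_o(2)[OF \<sigma>] comp_id) simp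
  show "(\<lambda>q. q \<circ> \<sigma>) ` {q. q permutes U - S} \<subseteq> {p. p permutes U \<and> (\<forall>x\<in>S. p x = \<sigma> x)}"
  proof clarify
    fix q assume q: "q permutes U - S"
    have "q \<circ> \<sigma> permutes U"
      by (rule permutes_compose[OF permutes_subset[OF \<sigma> SU] permutes_subset[OF q]]) blast
    moreover have "q (\<sigma> x) = \<sigma> x" if "x \<in> S" for x
      using permutes_not_in[OF q] permutes_in_image[OF \<sigma>] that by blast
    ultimately show "q \<circ> \<sigma> permutes U \<and> (\<forall>x\<in>S. (q \<circ> \<sigma>) x = \<sigma> x)" by simp
  qed
  show "(\<lambda>p. p \<circ> inv_into UNIV \<sigma>) ` {p. p permutes U \<and> (\<forall>x\<in>S. p x = \<sigma> x)} \<subseteq> {q. q permutes U - S}"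
  proof clarify
    fix p assume p: "p permutes U" "\<forall>x\<in>S. p x = \<sigma> x"
    have "p \<circ> inv_into UNIV \<sigma> permutes U"
      by (rule permutes_compose[OF permutes_subset[OF permutes_inv[OF \<sigma>] SU] p(1)])
    moreover have "(p \<circ> inv_into UNIV \<sigma>) x = x" if "x \<in> S" for x
      using p(2) permutes_in_image[OF permutes_inv[OF \<sigma>]] permutes_inverses(1)[OF \<sigma>] that by simp
    ultimately show "p \<circ> inv_into UNIV \<sigma> permutes U - S"
      by (rule permutes_superset) blast
  qed
qed

lemma prod_set_minus_hd_conv_nth:
  assumes "distinct xs" "xs \<noteq> []"
  shows "(\<Prod>x\<in>set xs - {hd xs}. f x) = (\<Prod>i<length xs - 1. f (xs ! Suc i))"
proof -
  have "set xs - {hd xs} = set (tl xs)" using assms by (cases xs) auto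
  moreover have "bij_betw ((!) (tl xs)) {..<length xs - 1} (set (tl xs))"
    using assms by (intro bij_betw_nth) (auto simp: distinct_tl)
  ultimately show ?thesis
    using assms by (simp add: prod.reindex_bij_betw[symmetric] nth_tl)
qed

lemma eq_cycle_of_list_rev_on_set:
  assumes \<pi>: "distinct \<pi>" "\<pi> \<noteq> []"
    and hd: "p (hd \<pi>) = last \<pi>" and nth: "\<And>i. Suc i < length \<pi> \<Longrightarrow> p (\<pi> ! Suc i) = \<pi> ! i"
    and x: "x \<in> set \<pi>"
  shows "p x = cycle_of_list (rev \<pi>) x"
proof -
  obtain j where j: "j < length \<pi>" "x = \<pi> ! j" using x in_set_conv_nth[of x \<pi>] by auto
  show ?thesis
  proof (cases j)
    case 0
    then show ?thesis using j hd cycle_of_list_rev_hd[OF \<pi>] \<pi>(2) by (simp add: hd_conv_nth)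
  next
    case (Suc i)
    then show ?thesis using j nth[of i] cycle_of_list_rev_nth_Suc[OF \<pi>(1), of i] by simp
  qed
qed

lemma signof_mult_prod_comp_cycle_of_list_rev:
  fixes f :: "nat \<Rightarrow> nat \<Rightarrow> 'a::comm_ring_1"
  assumes U: "finite U" and \<pi>: "distinct \<pi>" "\<pi> \<noteq> []" "set \<pi> \<subseteq> U"
    and q: "q permutes U - set \<pi>"
  shows "signof (q \<circ> cycle_of_list (rev \<pi>)) * (\<Prod>k\<in>U - {hd \<pi>}. f k ((q \<circ> cycle_of_list (rev \<pi>)) k))
    = (\<Prod>i<length \<pi> - 1. - f (\<pi> ! Suc i) (\<pi> ! i)) * (signof q * (\<Prod>k\<in>U - set \<pi>. f k (q k)))"
proof -
  define \<sigma> where "\<sigma> = cycle_of_list (rev \<pi>)"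
  have \<sigma>: "\<sigma> permutes set \<pi>" unfolding \<sigma>_def using cycle_permutes[of "rev \<pi>"] by simp
  have q_fixes: "q x = x" if "x \<in> set \<pi>" for x using permutes_not_in[OF q] that by blast
  have \<sigma>_fixes: "\<sigma> x = x" if "x \<notin> set \<pi>" for x using permutes_not_in[OF \<sigma> that] .
  have sign: "signof (q \<circ> \<sigma>) = (signof q * (-1) ^ (length \<pi> - 1) :: 'a)"
    using sign_compose[OF permutes_imp_permutation[OF _ q] permutes_imp_permutation[OF _ \<sigma>]]
      sign_cycle_of_list[of "rev \<pi>"] \<pi>(1) U by (simp add: \<sigma>_def)
  have split: "U - {hd \<pi>} = (set \<pi> - {hd \<pi>}) \<union> (U - set \<pi>)" using \<pi>(2,3) by auto
  have "(\<Prod>k\<in>U - {hd \<pi>}. f k ((q \<circ> \<sigma>) k))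
      = (\<Prod>k\<in>set \<pi> - {hd \<pi>}. f k ((q \<circ> \<sigma>) k)) * (\<Prod>k\<in>U - set \<pi>. f k ((q \<circ> \<sigma>) k))"
    unfolding split by (rule prod.union_disjoint) (use U in auto)
  also have "(\<Prod>k\<in>set \<pi> - {hd \<pi>}. f k ((q \<circ> \<sigma>) k)) = (\<Prod>k\<in>set \<pi> - {hd \<pi>}. f k (\<sigma> k))"
    using q_fixes permutes_in_image[OF \<sigma>] by (intro prod.cong refl) simp
  also have "\<dots> = (\<Prod>i<length \<pi> - 1. f (\<pi> ! Suc i) (\<pi> ! i))"
    using \<pi>(1,2) cycle_of_list_rev_nth_Suc[OF \<pi>(1)] by (simp add: prod_set_minus_hd_conv_nth \<sigma>_def)
  also have "(\<Prod>k\<in>U - set \<pi>. f k ((q \<circ> \<sigma>) k)) = (\<Prod>k\<in>U - set \<pi>. f k (q k))"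
    using \<sigma>_fixes by (intro prod.cong refl) simp
  finally have prod: "(\<Prod>k\<in>U - {hd \<pi>}. f k ((q \<circ> \<sigma>) k))
      = (\<Prod>i<length \<pi> - 1. f (\<pi> ! Suc i) (\<pi> ! i)) * (\<Prod>k\<in>U - set \<pi>. f k (q k))" .
  have path: "(\<Prod>i<length \<pi> - 1. - f (\<pi> ! Suc i) (\<pi> ! i))
      = (-1) ^ (length \<pi> - 1) * (\<Prod>i<length \<pi> - 1. f (\<pi> ! Suc i) (\<pi> ! i))"
    by (simp add: prod_uminus)
  show ?thesis unfolding \<sigma>_def[symmetric] sign prod path by (simp only: ac_simps)
qed

section \<open>Leibniz expansions of minors\<close>

lemma bij_betw_pick:
  assumes "finite I"
  shows "bij_betw (pick I) {0..<card I} I"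
proof -
  have inj: "inj_on (pick I) {0..<card I}"
    by (intro inj_onI) (metis atLeastLessThan_iff nat_neq_iff pick_mono)
  have img: "pick I ` {0..<card I} \<subseteq> I"
    using pick_in_set by auto
  show ?thesis
    unfolding bij_betw_def using inj img card_subset_eq[OF assms img] card_image[OF inj] by auto
qed

lemma det_submatrix_eq_sum_permutes:
  fixes A :: "'a::comm_ring_1 mat"
  assumes A: "A \<in> carrier_mat n n" and I: "I \<subseteq> {0..<n}"
  shows "det (submatrix A I I) = (\<Sum>q | q permutes I. signof q * (\<Prod>k\<in>I. A $$ (k, q k)))"
proof -
  define m where "m = card I"
  define f where "f = pick I"
  have finI: "finite I" using I finite_subset by blast
  have bij: "bij_betw f {0..<m} I" unfolding f_def m_def by (rule bij_betw_pick[OF finI])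
  then have inj: "inj_on f {0..<m}" by (rule bij_betw_imp_inj_on)
  define g where "g = inv_into {0..<m} f"
  have bijg: "bij_betw g I {0..<m}" unfolding g_def by (rule bij_betw_inv_into[OF bij])
  have gf: "\<And>x. x \<in> {0..<m} \<Longrightarrow> g (f x) = x" unfolding g_def using inj by simp
  have fg: "\<And>x. x \<in> I \<Longrightarrow> f (g x) = x" unfolding g_def using bij by (simp add: bij_betw_inv_into_right)
  have rows: "{i. i < n \<and> i \<in> I} = I" using I by auto
  have sub: "submatrix A I I \<in> carrier_mat m m"
    using dim_submatrix[of A I I] A rows unfolding carrier_mat_def m_def by simp
  have "det (submatrix A I I) = (\<Sum>p | p permutes {0..<m}. signof p * (\<Prod>k=0..<m. A $$ (f k, f (p k))))"
    unfolding det_def'[OF sub]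
  proof (intro sum.cong refl arg_cong2[where f="(*)"] prod.cong)
    fix p k assume p: "p \<in> {p. p permutes {0..<m}}" and k: "k \<in> {0..<m}"
    have "p k < m" using p k permutes_in_image by fastforce
    then show "submatrix A I I $$ (k, p k) = A $$ (f k, f (p k))"
      unfolding f_def using k A by (subst submatrix_index) (auto simp: rows m_def)
  qed
  also have "\<dots> = (\<Sum>q | q permutes I. signof q * (\<Prod>k\<in>I. A $$ (k, q k)))"
  proof (rule sum.reindex_bij_witness[of _ "map_permutation I g" "map_permutation {0..<m} f"])
    fix p assume p: "p \<in> {p. p permutes {0..<m}}"
    show "map_permutation I g (map_permutation {0..<m} f p) = p"
      using map_permutation_compose_inv[OF bij _ gf] p by auto
    show "map_permutation {0..<m} f p \<in> {q. q permutes I}"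
      using map_permutation_permutes[OF bij] p by auto
    have "(\<Prod>k\<in>I. A $$ (k, map_permutation {0..<m} f p k))
        = (\<Prod>k\<in>{0..<m}. A $$ (f k, map_permutation {0..<m} f p (f k)))"
      by (rule prod.reindex_bij_betw[OF bij, symmetric])
    also have "\<dots> = (\<Prod>k\<in>{0..<m}. A $$ (f k, f (p k)))"
      by (intro prod.cong refl) (simp add: map_permutation_apply[OF inj])
    finally show "signof (map_permutation {0..<m} f p) * (\<Prod>k\<in>I. A $$ (k, map_permutation {0..<m} f p k))
       = signof p * (\<Prod>k = 0..<m. A $$ (f k, f (p k)))"
      using sign_map_permutation[OF inj] p by auto
  next
    fix q assume q: "q \<in> {q. q permutes I}"
    show "map_permutation {0..<m} f (map_permutation I g q) = q"
      using map_permutation_compose_inv[OF bijg _ fg] q by auto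
    show "map_permutation I g q \<in> {p. p permutes {0..<m}}"
      using map_permutation_permutes[OF bijg] q by auto
  qed
  finally show ?thesis .
qed

lemma map_mat_submatrix:
  assumes "I \<subseteq> {0..<dim_row A}" "J \<subseteq> {0..<dim_col A}"
  shows "map_mat f (submatrix A I J) = submatrix (map_mat f A) I J"
proof -
  have card: "{i. i < dim_row A \<and> i \<in> I} = I" "{j. j < dim_col A \<and> j \<in> J} = J"
    using assms by auto
  have "pick I i < dim_row A" if "i < card I" for i
    using pick_in_set[of i I] assms(1) that by auto
  moreover have "pick J j < dim_col A" if "j < card J" for j
    using pick_in_set[of j J] assms(2) that by auto
  ultimately show ?thesis
    unfolding submatrix_def by (intro eq_matI) (auto simp: card)
qed

lemma submatrix_principal_shift:
  fixes A :: "'a::comm_ring_1 mat"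
  assumes A: "A \<in> carrier_mat n n" and I: "I \<subseteq> {0..<n}"
  shows "submatrix (s \<cdot>\<^sub>m 1\<^sub>m n + A) I I = s \<cdot>\<^sub>m 1\<^sub>m (card I) + submatrix A I I"
proof -
  have rows: "{i. i < n \<and> i \<in> I} = I" using I by auto
  have pick_lt: "pick I i < n" if "i < card I" for i
    using pick_in_set[of i I] I that by auto
  have pick_eq: "pick I i = pick I j \<longleftrightarrow> i = j" if "i < card I" "j < card I" for i j
    using pick_mono[of i I j] pick_mono[of j I i] that by (metis less_irrefl nat_neq_iff)
  show ?thesis
    using A by (intro eq_matI) (auto simp: submatrix_def rows pick_lt pick_eq)
qed

lemma cofactor_eq_det_unit_row:
  fixes A :: "'a::comm_ring_1 mat"
  assumes A: "A \<in> carrier_mat n n" and i: "i < n" and j: "j < n"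
  shows "cofactor A i j
    = det (mat n n (\<lambda>(k, l). if k = i then (if l = j then 1 else 0) else A $$ (k, l)))"
proof -
  define B where "B = mat n n (\<lambda>(k, l). if k = i then (if l = j then 1 else 0) else A $$ (k, l))"
  have B: "B \<in> carrier_mat n n" unfolding B_def by simp
  have "det B = (\<Sum>l<n. B $$ (i, l) * cofactor B i l)" by (rule laplace_expansion_row[OF B i])
  also have "\<dots> = (\<Sum>l<n. if l = j then cofactor B i l else 0)"
  proof (intro sum.cong refl)
    fix l assume "l \<in> {..<n}"
    then have "B $$ (i, l) = (if l = j then 1 else 0)" unfolding B_def using i by simp
    then show "B $$ (i, l) * cofactor B i l = (if l = j then cofactor B i l else 0)" by simp
  qed
  also have "\<dots> = cofactor B i j" using j by simp
  also have "\<dots> = cofactor A i j"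
  proof -
    have "mat_delete B i j = mat_delete A i j"
      unfolding mat_delete_def B_def using A by (intro eq_matI) auto
    then show ?thesis by (simp add: cofactor_def)
  qed
  finally show ?thesis unfolding B_def by (rule sym)
qed

lemma cofactor_eq_sum_permutes:
  fixes A :: "'a::comm_ring_1 mat"
  assumes A: "A \<in> carrier_mat n n" and i: "i < n" and j: "j < n"
  shows "cofactor A i j
    = (\<Sum>p | p permutes {0..<n} \<and> p i = j. signof p * (\<Prod>k\<in>{0..<n}-{i}. A $$ (k, p k)))"
proof -
  define B where "B = mat n n (\<lambda>(k, l). if k = i then (if l = j then 1 else 0) else A $$ (k, l))"
  have B: "B \<in> carrier_mat n n" unfolding B_def by simp
  have "cofactor A i j = (\<Sum>p | p permutes {0..<n}. signof p * (\<Prod>k=0..<n. B $$ (k, p k)))"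
    unfolding cofactor_eq_det_unit_row[OF A i j] B_def[symmetric] by (rule det_def'[OF B])
  also have "\<dots> = (\<Sum>p | p permutes {0..<n}.
      if p i = j then signof p * (\<Prod>k\<in>{0..<n}-{i}. A $$ (k, p k)) else 0)"
  proof (intro sum.cong refl)
    fix p assume p: "p \<in> {p. p permutes {0..<n}}"
    have pk: "k < n \<Longrightarrow> p k < n" for k using p permutes_in_image by fastforce
    have "(\<Prod>k=0..<n. B $$ (k, p k)) = B $$ (i, p i) * (\<Prod>k\<in>{0..<n}-{i}. B $$ (k, p k))"
      by (rule prod.remove) (use i in auto)
    also have "(\<Prod>k\<in>{0..<n}-{i}. B $$ (k, p k)) = (\<Prod>k\<in>{0..<n}-{i}. A $$ (k, p k))"
      by (intro prod.cong refl) (auto simp: B_def pk)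
    finally show "signof p * (\<Prod>k=0..<n. B $$ (k, p k))
        = (if p i = j then signof p * (\<Prod>k\<in>{0..<n}-{i}. A $$ (k, p k)) else 0)"
      using i pk[OF i] by (auto simp: B_def)
  qed
  also have "\<dots> = (\<Sum>p | p permutes {0..<n} \<and> p i = j. signof p * (\<Prod>k\<in>{0..<n}-{i}. A $$ (k, p k)))"
    by (subst sum.inter_filter[symmetric]) (simp_all add: finite_permutations conj_commute)
  finally show ?thesis .
qed

lemma cofactor_eq_path_prod_det_submatrix:
  fixes A :: "'a::comm_ring_1 mat" and \<pi> :: "nat list"
  assumes A: "A \<in> carrier_mat n n"
    and \<pi>: "distinct \<pi>" "\<pi> \<noteq> []" "set \<pi> \<subseteq> {0..<n}"
    and forced: "\<And>p i. p permutes {0..<n} \<Longrightarrow> p (hd \<pi>) = last \<pi>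
      \<Longrightarrow> (\<Prod>k\<in>{0..<n}-{hd \<pi>}. A $$ (k, p k)) \<noteq> 0 \<Longrightarrow> Suc i < length \<pi>
      \<Longrightarrow> p (\<pi> ! Suc i) = \<pi> ! i"
  shows "cofactor A (hd \<pi>) (last \<pi>)
    = (\<Prod>i<length \<pi> - 1. - A $$ (\<pi> ! Suc i, \<pi> ! i))
      * det (submatrix A ({0..<n} - set \<pi>) ({0..<n} - set \<pi>))"
proof -
  define c t S' where "c = hd \<pi>" and "t = last \<pi>" and "S' = {0..<n} - set \<pi>"
  define P where "P = (\<Prod>i<length \<pi> - 1. - A $$ (\<pi> ! Suc i, \<pi> ! i))"
  define \<sigma> where "\<sigma> = cycle_of_list (rev \<pi>)"
  define F where "F p = signof p * (\<Prod>k\<in>{0..<n}-{c}. A $$ (k, p k))" for p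
  have \<sigma>: "\<sigma> permutes set \<pi>" unfolding \<sigma>_def using cycle_permutes[of "rev \<pi>"] by simp
  have \<sigma>c: "\<sigma> c = t" unfolding \<sigma>_def c_def t_def using \<pi>(1,2) by (rule cycle_of_list_rev_hd)
  have ct: "c \<in> set \<pi>" "t \<in> set \<pi>" using \<pi>(2) by (simp_all add: c_def t_def)
  have "cofactor A c t = (\<Sum>p | p permutes {0..<n} \<and> p c = t. F p)"
    unfolding F_def using \<pi>(3) ct by (intro cofactor_eq_sum_permutes[OF A]) auto
  also have "\<dots> = (\<Sum>p | p permutes {0..<n} \<and> (\<forall>x\<in>set \<pi>. p x = \<sigma> x). F p)"
  proof (rule sum.mono_neutral_right)
    show "finite {p. p permutes {0..<n} \<and> p c = t}"
      by (rule finite_subset[OF _ finite_permutations[of "{0..<n}"]]) auto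
    show "{p. p permutes {0..<n} \<and> (\<forall>x\<in>set \<pi>. p x = \<sigma> x)} \<subseteq> {p. p permutes {0..<n} \<and> p c = t}"
      using ct \<sigma>c by auto
    show "\<forall>p \<in> {p. p permutes {0..<n} \<and> p c = t} - {p. p permutes {0..<n} \<and> (\<forall>x\<in>set \<pi>. p x = \<sigma> x)}.
        F p = 0"
    proof
      fix p
      assume "p \<in> {p. p permutes {0..<n} \<and> p c = t} - {p. p permutes {0..<n} \<and> (\<forall>x\<in>set \<pi>. p x = \<sigma> x)}"
      then have p: "p permutes {0..<n}" "p c = t" and not_\<sigma>: "\<exists>x\<in>set \<pi>. p x \<noteq> \<sigma> x" by auto
      show "F p = 0"
      proof (rule ccontr)
        assume "F p \<noteq> 0"
        then have "(\<Prod>k\<in>{0..<n}-{c}. A $$ (k, p k)) \<noteq> 0" by (auto simp: F_def)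
        then have "\<And>i. Suc i < length \<pi> \<Longrightarrow> p (\<pi> ! Suc i) = \<pi> ! i"
          using forced[OF p(1)] p(2) by (simp add: c_def t_def)
        then have "p x = \<sigma> x" if "x \<in> set \<pi>" for x
          unfolding \<sigma>_def using \<pi>(1,2) p(2) that
          by (intro eq_cycle_of_list_rev_on_set) (simp_all add: c_def t_def)
        with not_\<sigma> show False by blast
      qed
    qed
  qed
  also have "\<dots> = (\<Sum>q | q permutes S'. F (q \<circ> \<sigma>))"
    unfolding S'_def
    by (rule sum.reindex_bij_betw[OF bij_betw_compose_permutes_agreeing[OF \<sigma> \<pi>(3)], symmetric])
  also have "\<dots> = (\<Sum>q | q permutes S'. P * (signof q * (\<Prod>k\<in>S'. A $$ (k, q k))))"
  proof (rule sum.cong[OF refl])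
    fix q assume "q \<in> {q. q permutes S'}"
    then show "F (q \<circ> \<sigma>) = P * (signof q * (\<Prod>k\<in>S'. A $$ (k, q k)))"
      using signof_mult_prod_comp_cycle_of_list_rev[OF finite_atLeastLessThan \<pi>, of q "\<lambda>k l. A $$ (k, l)"]
      by (simp add: F_def P_def \<sigma>_def c_def S'_def)
  qed
  also have "\<dots> = P * det (submatrix A S' S')"
    using \<pi>(3) by (simp add: sum_distrib_left det_submatrix_eq_sum_permutes[OF A] S'_def)
  finally show ?thesis by (simp add: c_def t_def S'_def P_def)
qed

lemma eigenvalue_uminus_iff_det_shift:
  fixes A :: "'a::field mat"
  assumes A: "A \<in> carrier_mat n n"
  shows "eigenvalue (- A) s \<longleftrightarrow> det (s \<cdot>\<^sub>m 1\<^sub>m n + A) = 0"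
proof -
  have "char_matrix (- A) s = - (s \<cdot>\<^sub>m 1\<^sub>m n + A)"
    unfolding char_matrix_def using A by (intro eq_matI) auto
  then show ?thesis
    using eigenvalue_det[of "- A" n s] det_0_negate[of "s \<cdot>\<^sub>m 1\<^sub>m n + A" n] A by simp
qed

section \<open>Paths and the Laplacian\<close>

lemma permutation_orbit_dpath:
  assumes p: "p permutes {0..<N}" and pc: "p c = t" and c: "c < N" "c \<noteq> t"
    and arcs: "\<And>k. k < N \<Longrightarrow> k \<noteq> c \<Longrightarrow> p k \<noteq> k \<Longrightarrow> a k (p k) > 0"
  obtains vs where "dpath N a c t vs" and "\<And>i. Suc i < length vs \<Longrightarrow> p (vs ! Suc i) = vs ! i"
proof -
  \<comment> \<open>The orbit t, p t, p (p t), ... reaches c; read backwards it is a path from c to t.\<close>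
  define w where "w j = (p ^^ j) t" for j
  define k where "k = funpow_dist p t c"
  have perm: "permutation p" using p by (rule permutes_imp_permutation[OF finite_atLeastLessThan])
  have orbit: "c \<in> orbit p t"
    using permutation_self_in_orbit[OF perm, of c] permutation_orbit_step[OF perm, of c] pc by simp
  have wk: "w k = c" unfolding w_def k_def by (rule funpow_dist_prop[OF orbit])
  have before_k: "j < k \<Longrightarrow> w j \<noteq> c" for j unfolding w_def k_def by (rule funpow_dist_least)
  have inj: "inj_on w {0..k}" unfolding w_def k_def by (rule inj_on_funpow_dist[OF orbit])
  have wN: "w j < N" for j
    using permutes_in_image[OF permutes_funpow[OF p, of j], of t] pc permutes_in_image[OF p, of c] c
    by (simp add: w_def)
  define vs where "vs = map (\<lambda>j. w (k - j)) [0..<Suc k]"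
  have len: "length vs = Suc k" unfolding vs_def by simp
  have vs_nth: "j \<le> k \<Longrightarrow> vs ! j = w (k - j)" for j unfolding vs_def by (simp del: upt_Suc)
  have step: "p (vs ! Suc j) = vs ! j" if "Suc j < length vs" for j
  proof -
    have "k - j = Suc (k - Suc j)" using that len by simp
    then show ?thesis using that len vs_nth[of j] vs_nth[of "Suc j"] by (simp add: w_def)
  qed
  have "dpath N a c t vs"
    unfolding dpath_def
  proof (intro conjI allI impI)
    show "vs \<noteq> []" using len by auto
    then show "hd vs = c" "last vs = t"
      using vs_nth[of 0] vs_nth[of k] wk len by (simp_all add: hd_conv_nth last_conv_nth w_def)
    have "inj_on (\<lambda>j. w (k - j)) {0..<Suc k}"
      using inj by (intro inj_onI) (auto dest: inj_onD)
    then show "distinct vs" unfolding vs_def by (simp add: distinct_map atLeast_upt del: upt_Suc)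
    show "set vs \<subseteq> {..<N}" unfolding vs_def using wN by auto
    fix j assume j: "Suc j < length vs"
    have "vs ! Suc j \<noteq> c" using before_k[of "k - Suc j"] j len vs_nth[of "Suc j"] by simp
    moreover have "vs ! j \<noteq> vs ! Suc j"
      using inj_onD[OF inj, of "k - j" "k - Suc j"] j len vs_nth[of j] vs_nth[of "Suc j"] by auto
    ultimately show "a (vs ! Suc j) (vs ! j) > 0"
      using arcs[of "vs ! Suc j"] step[OF j] wN j len vs_nth[of "Suc j"] by simp
  qed
  from this step show thesis by (rule that)
qed

lemma shortest_dist_unique_dpath:
  assumes "dpath N a u w \<pi>" and "\<forall>vs. dpath N a u w vs \<longrightarrow> vs = \<pi>"
  shows "shortest_dist N a u w = path_length \<pi>"
  unfolding shortest_dist_def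
proof (rule Least_equality)
  show "\<exists>vs. dpath N a u w vs \<and> path_length vs = path_length \<pi>"
    using assms(1) by blast
  show "path_length \<pi> \<le> l" if "\<exists>vs. dpath N a u w vs \<and> path_length vs = l" for l
    using that assms(2) by blast
qed

lemma path_weight_pos:
  assumes "dpath N a u w vs"
  shows "path_weight a vs > 0"
  using assms unfolding path_weight_def dpath_def by (intro prod_pos) auto

lemma laplacian_carrier_mat: "laplacian N a \<in> carrier_mat N N"
  unfolding laplacian_def adjacency_def by (intro minus_carrier_mat mat_carrier)

lemma laplacian_offdiag:
  assumes "i < N" "j < N" "i \<noteq> j"
  shows "laplacian N a $$ (i, j) = - a i j"
  using assms unfolding laplacian_def adjacency_def by simp

lemma shifted_laplacian_offdiag:
  fixes s :: complex
  assumes "i < N" "j < N" "i \<noteq> j"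
  shows "(s \<cdot>\<^sub>m 1\<^sub>m N + cmat (laplacian N a)) $$ (i, j) = - complex_of_real (a i j)"
  using assms laplacian_carrier_mat[of N a] laplacian_offdiag[OF assms, of a] by simp

lemma permutes_nonzero_term_follows_unique_dpath:
  fixes s :: complex
  assumes G: "weighted_digraph N a" and c: "c < N" "c \<noteq> t"
    and unique: "\<forall>vs. dpath N a c t vs \<longrightarrow> vs = \<pi>"
    and p: "p permutes {0..<N}" "p c = t"
    and nonzero: "(\<Prod>k\<in>{0..<N}-{c}. (s \<cdot>\<^sub>m 1\<^sub>m N + cmat (laplacian N a)) $$ (k, p k)) \<noteq> 0"
    and i: "Suc i < length \<pi>"
  shows "p (\<pi> ! Suc i) = \<pi> ! i"
proof -
  have arcs: "a k (p k) > 0" if k: "k < N" "k \<noteq> c" "p k \<noteq> k" for k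
  proof -
    have pk: "p k < N" using permutes_in_image[OF p(1)] k(1) by simp
    have "(s \<cdot>\<^sub>m 1\<^sub>m N + cmat (laplacian N a)) $$ (k, p k) \<noteq> 0" using nonzero k by auto
    then have "a k (p k) \<noteq> 0" using shifted_laplacian_offdiag[of k N "p k"] k pk by simp
    then show ?thesis using G k(1) pk by (auto simp: weighted_digraph_def less_le)
  qed
  obtain vs where "dpath N a c t vs" and "\<And>i. Suc i < length vs \<Longrightarrow> p (vs ! Suc i) = vs ! i"
    using permutation_orbit_dpath[where a = a, OF p c arcs] by metis
  then show ?thesis using unique i by blast
qed

lemma cofactor_shifted_laplacian_unique_dpath:
  fixes s :: complex
  assumes G: "weighted_digraph N a" and c: "c < N" "c \<noteq> t"
    and path: "dpath N a c t \<pi>" and unique: "\<forall>vs. dpath N a c t vs \<longrightarrow> vs = \<pi>"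
  defines "S' \<equiv> {..<N} - set \<pi>"
  shows "cofactor (s \<cdot>\<^sub>m 1\<^sub>m N + cmat (laplacian N a)) c t
    = complex_of_real (path_weight a \<pi>)
      * det (s \<cdot>\<^sub>m 1\<^sub>m (card S') + cmat (submatrix (laplacian N a) S' S'))"
proof -
  define L where "L = laplacian N a"
  define M where "M = s \<cdot>\<^sub>m 1\<^sub>m N + cmat L"
  have L: "L \<in> carrier_mat N N" unfolding L_def by (rule laplacian_carrier_mat)
  then have M: "M \<in> carrier_mat N N" unfolding M_def by simp
  have \<pi>: "distinct \<pi>" "\<pi> \<noteq> []" "set \<pi> \<subseteq> {0..<N}" "hd \<pi> = c" "last \<pi> = t"
    using path by (auto simp: dpath_def)
  have "cofactor M (hd \<pi>) (last \<pi>)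
      = (\<Prod>i<length \<pi> - 1. - M $$ (\<pi> ! Suc i, \<pi> ! i))
        * det (submatrix M ({0..<N} - set \<pi>) ({0..<N} - set \<pi>))"
  proof (rule cofactor_eq_path_prod_det_submatrix[OF M \<pi>(1-3)])
    fix p i
    assume "p permutes {0..<N}" "p (hd \<pi>) = last \<pi>"
      "(\<Prod>k\<in>{0..<N}-{hd \<pi>}. M $$ (k, p k)) \<noteq> 0" "Suc i < length \<pi>"
    then show "p (\<pi> ! Suc i) = \<pi> ! i"
      unfolding \<pi>(4,5) M_def L_def by (rule permutes_nonzero_term_follows_unique_dpath[OF G c unique])
  qed
  then have "cofactor M c t
      = (\<Prod>i<length \<pi> - 1. - M $$ (\<pi> ! Suc i, \<pi> ! i)) * det (submatrix M S' S')"
    using \<pi>(4,5) by (simp add: S'_def atLeast0LessThan)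
  also have "(\<Prod>i<length \<pi> - 1. - M $$ (\<pi> ! Suc i, \<pi> ! i)) = complex_of_real (path_weight a \<pi>)"
  proof -
    have "- M $$ (\<pi> ! Suc i, \<pi> ! i) = complex_of_real (a (\<pi> ! Suc i) (\<pi> ! i))"
      if "i < length \<pi> - 1" for i
    proof -
      have "\<pi> ! Suc i \<in> set \<pi>" "\<pi> ! i \<in> set \<pi>" using that by simp_all
      then have "\<pi> ! Suc i < N" "\<pi> ! i < N" using \<pi>(3) by auto
      moreover have "\<pi> ! Suc i \<noteq> \<pi> ! i" using that \<pi>(1) by (simp add: nth_eq_iff_index_eq)
      ultimately show ?thesis unfolding M_def L_def by (simp add: shifted_laplacian_offdiag)
    qed
    then show ?thesis by (simp add: path_weight_def)
  qed
  also have "submatrix M S' S' = s \<cdot>\<^sub>m 1\<^sub>m (card S') + cmat (submatrix L S' S')"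
  proof -
    have S': "S' \<subseteq> {0..<N}" by (auto simp: S'_def)
    have "submatrix M S' S' = s \<cdot>\<^sub>m 1\<^sub>m (card S') + submatrix (cmat L) S' S'"
      unfolding M_def using L S' by (intro submatrix_principal_shift) auto
    also have "submatrix (cmat L) S' S' = cmat (submatrix L S' S')"
      using L S' by (intro map_mat_submatrix[symmetric]) auto
    finally show ?thesis .
  qed
  finally show ?thesis by (simp add: M_def L_def)
qed

theorem theorem3:
  fixes N :: nat and a :: "nat \<Rightarrow> nat \<Rightarrow> real" and c t :: nat and \<pi> :: "nat list"
  assumes G: "weighted_digraph N a"
    and ct: "c < N" "t < N" "c \<noteq> t"
    and path: "dpath N a c t \<pi>"
    and unique: "\<forall>vs. dpath N a c t vs \<longrightarrow> vs = \<pi>"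
  defines "\<delta> \<equiv> shortest_dist N a c t"
    and "Lbar \<equiv> submatrix (laplacian N a) ({..<N} - set \<pi>) ({..<N} - set \<pi>)"
    and "h \<equiv> (\<lambda>s::complex. adj_mat (s \<cdot>\<^sub>m 1\<^sub>m N + cmat (laplacian N a)) $$ (t, c))"
  shows "Lbar \<in> carrier_mat (N - \<delta> - 1) (N - \<delta> - 1)
    \<and> (\<forall>s::complex. h s = complex_of_real (path_weight a \<pi>)
                      * det (s \<cdot>\<^sub>m 1\<^sub>m (N - \<delta> - 1) + cmat Lbar))
    \<and> {s. h s = 0} = {s. eigenvalue (- cmat Lbar) s}"
proof -
  define S' where "S' = {..<N} - set \<pi>"
  have \<pi>: "\<pi> \<noteq> []" "distinct \<pi>" "set \<pi> \<subseteq> {..<N}" using path by (simp_all add: dpath_def)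
  have "\<delta> = length \<pi> - 1"
    using shortest_dist_unique_dpath[OF path unique] by (simp add: \<delta>_def path_length_def)
  moreover have "card S' = N - length \<pi>"
    unfolding S'_def using \<pi> by (simp add: card_Diff_subset distinct_card)
  ultimately have dim: "card S' = N - \<delta> - 1" using \<pi>(1) by simp
  have "dim_row (laplacian N a) = N" "dim_col (laplacian N a) = N"
    using laplacian_carrier_mat[of N a] by auto
  moreover have "{i. i < N \<and> i \<in> S'} = S'" by (auto simp: S'_def)
  ultimately have Lbar: "Lbar \<in> carrier_mat (card S') (card S')"
    unfolding carrier_mat_def Lbar_def S'_def[symmetric] by (simp add: dim_submatrix)
  have h: "h s = complex_of_real (path_weight a \<pi>) * det (s \<cdot>\<^sub>m 1\<^sub>m (card S') + cmat Lbar)" for s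
  proof -
    have "h s = cofactor (s \<cdot>\<^sub>m 1\<^sub>m N + cmat (laplacian N a)) c t"
      using ct laplacian_carrier_mat[of N a] by (simp add: h_def adj_mat_def)
    also have "\<dots> = complex_of_real (path_weight a \<pi>) * det (s \<cdot>\<^sub>m 1\<^sub>m (card S') + cmat Lbar)"
      unfolding Lbar_def S'_def by (rule cofactor_shifted_laplacian_unique_dpath[OF G ct(1,3) path unique])
    finally show ?thesis .
  qed
  have "h s = 0 \<longleftrightarrow> eigenvalue (- cmat Lbar) s" for s
    using eigenvalue_uminus_iff_det_shift[of "cmat Lbar" "card S'" s] Lbar h path_weight_pos[OF path]
    by simp
  then show ?thesis using Lbar h dim by simp
qed

end
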